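(* Let $U$ be a nonempty finite set and $R\subseteq U\times U$ a serial and transitive relation, and let $h$ be the height function of the lattice $(Reg(U,R),\subseteq)$. Define $$\mathbf{I}(Reg(U,R);h)=\{X\subseteq U\mid h(Y)\ge |X\cap Y| \text{ for all } Y\in Reg(U,R)\}.$$ Then $\mathbf{I}(Reg(U,R);h)$ satisfies the independent set axioms of a matroid on $U$: (I1) $\emptyset\in\mathbf{I}$; (I2) if $I\in\mathbf{I}$ and $I'\subseteq I$ then $I'\in\mathbf{I}$; (I3) if $I_1,I_2\in\mathbf{I}$ and $|I_1|<|I_2|$, then there exists $e\in I_2\setminus I_1$ with $I_1\cup\{e\}\in\mathbf{I}$.
   Context: $R_s(x)=\{y\in U\mid xRy\}$. $R$ is serial if every $x$ has some $y$ with $xRy$; transitive in the usual sense. $\underline{R}(X)=\{x\in U\mid R_s(x)\subseteq X\}$, $\overline{R}(X)=\{x\in U\mid R_s(x)\cap X\neq\emptyset\}$. $X\subseteq U$ is regular if $X=\underline{R}(\overline{R}(X))$; $Reg(U,R)$ is the set of regular sets ordered by inclusion (its least element is $\emptyset$). For $A\in Reg(U,R)$, the height $h(A)$ is the length (number of elements minus one) of a maximal chain in the interval $[\emptyset,A]=\{B\in Reg(U,R)\mid B\subseteq A\}$ (all such maximal chains have the same length in this finite lattice). *)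

theory Defs
  imports Main
begin

definition successors :: "('a \<times> 'a) set \<Rightarrow> 'a \<Rightarrow> 'a set" where
  "successors R x = {y. (x, y) \<in> R}"

definition serial_on :: "'a set \<Rightarrow> ('a \<times> 'a) set \<Rightarrow> bool" where
  "serial_on U R \<longleftrightarrow> (\<forall>x\<in>U. \<exists>y. (x, y) \<in> R)"

definition lower_approx :: "'a set \<Rightarrow> ('a \<times> 'a) set \<Rightarrow> 'a set \<Rightarrow> 'a set" where
  "lower_approx U R X = {x\<in>U. successors R x \<subseteq> X}"

definition upper_approx :: "'a set \<Rightarrow> ('a \<times> 'a) set \<Rightarrow> 'a set \<Rightarrow> 'a set" where
  "upper_approx U R X = {x\<in>U. successors R x \<inter> X \<noteq> {}}"

definition Reg :: "'a set \<Rightarrow> ('a \<times> 'a) set \<Rightarrow> 'a set set" where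
  "Reg U R = {X. X \<subseteq> U \<and> X = lower_approx U R (upper_approx U R X)}"

definition reg_chain :: "'a set \<Rightarrow> ('a \<times> 'a) set \<Rightarrow> 'a set \<Rightarrow> 'a set set \<Rightarrow> bool" where
  "reg_chain U R A C \<longleftrightarrow> C \<subseteq> {B \<in> Reg U R. B \<subseteq> A} \<and>
     (\<forall>X\<in>C. \<forall>Y\<in>C. X \<subseteq> Y \<or> Y \<subseteq> X)"

definition maximal_reg_chain :: "'a set \<Rightarrow> ('a \<times> 'a) set \<Rightarrow> 'a set \<Rightarrow> 'a set set \<Rightarrow> bool" where
  "maximal_reg_chain U R A C \<longleftrightarrow> reg_chain U R A C \<and>
     (\<forall>C'. reg_chain U R A C' \<and> C \<subseteq> C' \<longrightarrow> C' = C)"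

definition height :: "'a set \<Rightarrow> ('a \<times> 'a) set \<Rightarrow> 'a set \<Rightarrow> nat" where
  "height U R A = (SOME n. \<exists>C. maximal_reg_chain U R A C \<and> n = card C - 1)"

definition indep_sets :: "'a set \<Rightarrow> ('a \<times> 'a) set \<Rightarrow> 'a set set" where
  "indep_sets U R = {X. X \<subseteq> U \<and> (\<forall>Y\<in>Reg U R. card (X \<inter> Y) \<le> height U R Y)}"

end

theory Submission
  imports Defs
begin

text \<open>
  For a serial transitive relation on a finite set, every point \<open>x\<close> reaches a terminal
  point \<open>t\<close> (one reached back by all of its successors), and the successor sets of terminal
  points, the terminal classes, are the minimal successor sets. Approximating twice shows
  that \<open>X\<close> is regular exactly when \<open>X = \<phi> S\<close> for a set \<open>S\<close> of terminal classes, where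
  \<open>\<phi> S = points_within S\<close> consists of the points all of whose terminal classes lie in \<open>S\<close>. Hence \<open>Reg(U,R)\<close> is
  a Boolean lattice, the height of \<open>\<phi> S\<close> is \<open>|S|\<close>, and \<open>I\<close> is independent iff
  \<open>|I \<inter> \<phi> S| \<le> |S|\<close> for all \<open>S\<close>. Since \<open>\<phi>\<close> is monotone and preserves intersections, the
  sets \<open>S\<close> on which this bound is attained for \<open>I\<^sub>1\<close> are closed under union; if no element of
  \<open>I\<^sub>2 - I\<^sub>1\<close> could be added to \<open>I\<^sub>1\<close>, all of \<open>I\<^sub>2 - I\<^sub>1\<close> would lie in \<open>\<phi>\<close> of the greatest such \<open>S\<close>,
  and counting inside and outside that set gives \<open>|I\<^sub>2| \<le> |I\<^sub>1|\<close>.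
\<close>

lemma subset_maxchain_insert:
  assumes "subset.maxchain P C" "Z \<in> P" "\<forall>X\<in>C. X \<subseteq> Z \<or> Z \<subseteq> X"
  shows "Z \<in> C"
proof -
  have "subset.chain P (insert Z C)"
    using assms by (simp add: subset.maxchain_def subset_chain_insert)
  then show ?thesis using assms(1) by (metis subset.maxchain_def insertI1 psubsetI subset_insertI)
qed

locale graded_set_family =
  fixes P :: "'a set set" and Bot Top :: "'a set" and r :: "'a set \<Rightarrow> nat"
  assumes finite_P: "finite P"
    and Bot: "Bot \<in> P" "\<And>X. X \<in> P \<Longrightarrow> Bot \<subseteq> X" "r Bot = 0"
    and Top: "Top \<in> P" "\<And>X. X \<in> P \<Longrightarrow> X \<subseteq> Top"
    and rank_less: "\<And>X Y. X \<in> P \<Longrightarrow> Y \<in> P \<Longrightarrow> X \<subset> Y \<Longrightarrow> r X < r Y"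
    and rank_step: "\<And>X Y. X \<in> P \<Longrightarrow> Y \<in> P \<Longrightarrow> X \<subset> Y \<Longrightarrow>
      \<exists>Z\<in>P. X \<subset> Z \<and> Z \<subseteq> Y \<and> r Z = Suc (r X)"
begin

text \<open>Above a chain element \<open>X\<close> of rank \<open>j\<close> take the least chain element \<open>Y \<supset> X\<close>; a set of
  rank \<open>j + 1\<close> between them is comparable with the whole chain, hence already in it.\<close>
lemma maxchain_rank_onto:
  assumes C: "subset.maxchain P C" and "j \<le> r Top"
  shows "\<exists>X\<in>C. r X = j"
proof -
  have chain: "subset.chain P C" using C by (simp add: subset.maxchain_def)
  then have CP: "C \<subseteq> P" by (simp add: subset_chain_def)
  show ?thesis
    using \<open>j \<le> r Top\<close>
  proof (induction j)
    case 0
    have "Bot \<in> C" using Bot CP by (intro subset_maxchain_insert[OF C]) auto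
    then show ?case using Bot(3) by blast
  next
    case (Suc j)
    obtain X where X: "X \<in> C" "r X = j" using Suc by auto
    let ?above = "{W \<in> C. X \<subset> W}"
    define Y where "Y = \<Inter>?above"
    have "X \<noteq> Top" using X Suc.prems by auto
    moreover have "Top \<in> C" using Top CP by (intro subset_maxchain_insert[OF C]) auto
    ultimately have "Top \<in> ?above" using X(1) CP Top by auto
    moreover have "subset.chain P ?above" using chain by (auto simp: subset_chain_def)
    moreover have "finite ?above" using CP finite_P by (auto intro: finite_subset)
    ultimately have "Y \<in> ?above" unfolding Y_def by (intro Inter_in_chain) auto
    then obtain Z where Z: "Z \<in> P" "X \<subset> Z" "Z \<subseteq> Y" "r Z = Suc j"
      using rank_step X CP by blast
    have "\<forall>W\<in>C. W \<subseteq> Z \<or> Z \<subseteq> W"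
    proof
      fix W assume "W \<in> C"
      then consider "W \<subseteq> X" | "W \<in> ?above" using chain X(1) by (auto simp: subset_chain_def)
      then show "W \<subseteq> Z \<or> Z \<subseteq> W" using Z unfolding Y_def by cases auto
    qed
    then show ?case using subset_maxchain_insert C Z by blast
  qed
qed

lemma card_maxchain:
  assumes C: "subset.maxchain P C" shows "card C = Suc (r Top)"
proof -
  have CP: "C \<subseteq> P" and comparable: "\<And>X Y. X \<in> C \<Longrightarrow> Y \<in> C \<Longrightarrow> X \<subseteq> Y \<or> Y \<subseteq> X"
    using C by (auto simp: subset.maxchain_def subset_chain_def)
  have "r X \<le> r Top" if "X \<in> C" for X
  proof (cases "X = Top")
    case False
    then have "X \<subset> Top" using that CP Top by blast
    then show ?thesis using rank_less that CP Top(1) by (meson less_imp_le subsetD)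
  qed simp
  then have "r ` C = {..r Top}" using maxchain_rank_onto[OF C] by fastforce
  moreover have "inj_on r C"
  proof (rule inj_onI)
    fix X Y assume XY: "X \<in> C" "Y \<in> C" "r X = r Y"
    show "X = Y"
    proof (rule ccontr)
      assume "X \<noteq> Y"
      then have "X \<subset> Y \<or> Y \<subset> X" using comparable XY by blast
      then show False using rank_less XY CP by (metis less_irrefl subsetD)
    qed
  qed
  ultimately show ?thesis by (metis card_atMost card_image)
qed

end

locale intersective_map =
  fixes K :: "'b set" and f :: "'b set \<Rightarrow> 'a set"
  assumes finite_K: "finite K"
    and f_mono: "A \<subseteq> B \<Longrightarrow> f A \<subseteq> f B"
    and f_Int: "f A \<inter> f B \<subseteq> f (A \<inter> B)"
begin

definition card_bounded :: "'a set \<Rightarrow> bool" where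
  "card_bounded I \<longleftrightarrow> finite I \<and> (\<forall>S\<subseteq>K. card (I \<inter> f S) \<le> card S)"

definition tight :: "'a set \<Rightarrow> 'b set \<Rightarrow> bool" where
  "tight I S \<longleftrightarrow> S \<subseteq> K \<and> card (I \<inter> f S) = card S"

lemma card_bounded_empty: "card_bounded {}"
  by (simp add: card_bounded_def)

lemma card_bounded_subset:
  assumes "card_bounded I" "J \<subseteq> I" shows "card_bounded J"
proof -
  have "finite I" and bound: "\<And>S. S \<subseteq> K \<Longrightarrow> card (I \<inter> f S) \<le> card S"
    using assms(1) by (auto simp: card_bounded_def)
  moreover have "card (J \<inter> f S) \<le> card (I \<inter> f S)" for S
    using \<open>finite I\<close> assms(2) by (intro card_mono) auto
  ultimately show ?thesis
    using assms(2) finite_subset unfolding card_bounded_def by (meson le_trans)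
qed

lemma tight_Un:
  assumes I: "card_bounded I" and A: "tight I A" and B: "tight I B"
  shows "tight I (A \<union> B)"
proof -
  have "finite I" and bound: "\<And>S. S \<subseteq> K \<Longrightarrow> card (I \<inter> f S) \<le> card S"
    using I by (auto simp: card_bounded_def)
  have AB: "A \<subseteq> K" "B \<subseteq> K" using A B by (auto simp: tight_def)
  then have "finite A" "finite B" using finite_K finite_subset by blast+
  have "card (I \<inter> f A) + card (I \<inter> f B)
      = card ((I \<inter> f A) \<union> (I \<inter> f B)) + card ((I \<inter> f A) \<inter> (I \<inter> f B))"
    using \<open>finite I\<close> by (intro card_Un_Int) auto
  also have "\<dots> \<le> card (I \<inter> f (A \<union> B)) + card (I \<inter> f (A \<inter> B))"
    using \<open>finite I\<close> f_mono[of A "A \<union> B"] f_mono[of B "A \<union> B"] f_Int[of A B]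
    by (intro add_mono card_mono) auto
  also have "\<dots> \<le> card (I \<inter> f (A \<union> B)) + card (A \<inter> B)"
    using AB bound[of "A \<inter> B"] by auto
  finally have "card A + card B \<le> card (I \<inter> f (A \<union> B)) + card (A \<inter> B)"
    using A B by (simp add: tight_def)
  moreover have "card A + card B = card (A \<union> B) + card (A \<inter> B)"
    using \<open>finite A\<close> \<open>finite B\<close> by (rule card_Un_Int)
  moreover have "card (I \<inter> f (A \<union> B)) \<le> card (A \<union> B)" using AB bound by simp
  ultimately show ?thesis using AB by (simp add: tight_def)
qed

lemma greatest_tight_exists:
  assumes "card_bounded I"
  obtains M where "tight I M" "\<And>S. tight I S \<Longrightarrow> S \<subseteq> M"
proof -
  have bound: "\<And>S. S \<subseteq> K \<Longrightarrow> card (I \<inter> f S) \<le> card S"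
    using assms by (simp add: card_bounded_def)
  have "card (I \<inter> f {}) \<le> card ({} :: 'b set)" by (rule bound) simp
  then have "tight I {}" by (simp add: tight_def)
  moreover have "card S < Suc (card K)" if "tight I S" for S
    using that finite_K by (auto simp: tight_def le_imp_less_Suc card_mono)
  ultimately obtain M where M: "tight I M" "\<And>S. tight I S \<Longrightarrow> card S \<le> card M"
    using ex_has_greatest_nat[of "tight I" "{}" card "Suc (card K)"] by blast
  have "S \<subseteq> M" if "tight I S" for S
  proof -
    have "tight I (S \<union> M)" using tight_Un assms that M(1) by blast
    then have "finite (S \<union> M)" "card (S \<union> M) \<le> card M"
      using M(2) finite_K finite_subset by (auto simp: tight_def)
    then have "M = S \<union> M" by (intro card_seteq) auto
    then show ?thesis by blast
  qed
  with M(1) show ?thesis using that by blast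
qed

lemma violated_bound_tight:
  assumes "card_bounded I" "e \<notin> I" "\<not> card_bounded (insert e I)"
  obtains S where "tight I S" "e \<in> f S"
proof -
  have "finite I" and bound: "\<And>S. S \<subseteq> K \<Longrightarrow> card (I \<inter> f S) \<le> card S"
    using assms(1) by (auto simp: card_bounded_def)
  obtain S where S: "S \<subseteq> K" "card S < card (insert e I \<inter> f S)"
    using assms(3) \<open>finite I\<close> by (auto simp: card_bounded_def not_le)
  have "e \<in> f S"
  proof (rule ccontr)
    assume "e \<notin> f S"
    then have "insert e I \<inter> f S = I \<inter> f S" by blast
    then show False using S bound by (metis not_le)
  qed
  then have "card (insert e I \<inter> f S) = Suc (card (I \<inter> f S))"
    using \<open>finite I\<close> \<open>e \<notin> I\<close> by (simp add: Int_insert_left)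
  then have "tight I S" using S bound[of S] by (simp add: tight_def)
  with \<open>e \<in> f S\<close> show ?thesis using that by blast
qed

lemma card_bounded_augment:
  assumes I1: "card_bounded I1" and I2: "card_bounded I2" and less: "card I1 < card I2"
  shows "\<exists>e\<in>I2 - I1. card_bounded (insert e I1)"
proof (rule ccontr)
  assume no_extension: "\<not> ?thesis"
  obtain M where M: "tight I1 M" "\<And>S. tight I1 S \<Longrightarrow> S \<subseteq> M"
    using greatest_tight_exists I1 by blast
  have "I2 - I1 \<subseteq> f M"
  proof
    fix e assume e: "e \<in> I2 - I1"
    then obtain S where "tight I1 S" "e \<in> f S"
      using violated_bound_tight I1 no_extension by blast
    then show "e \<in> f M" using M(2) f_mono by blast
  qed
  then have outside: "I2 - f M \<subseteq> I1 - f M" by blast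
  have "finite I1" "finite I2" using I1 I2 by (auto simp: card_bounded_def)
  have "card I2 = card (I2 \<inter> f M) + card (I2 - f M)"
    using \<open>finite I2\<close> by (rule card_Int_Diff)
  also have "\<dots> \<le> card M + card (I1 - f M)"
    using I2 M(1) outside \<open>finite I1\<close>
    by (intro add_mono card_mono) (auto simp: card_bounded_def tight_def)
  also have "\<dots> = card (I1 \<inter> f M) + card (I1 - f M)"
    using M(1) by (simp add: tight_def)
  also have "\<dots> = card I1"
    using \<open>finite I1\<close> by (rule card_Int_Diff[symmetric])
  finally show False using less by simp
qed

end

lemma maximal_reg_chain_iff:
  "maximal_reg_chain U R A C \<longleftrightarrow> subset.maxchain {B \<in> Reg U R. B \<subseteq> A} C"
proof -
  have "reg_chain U R A C' \<longleftrightarrow> subset.chain {B \<in> Reg U R. B \<subseteq> A} C'" for C'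
    by (simp add: reg_chain_def subset_chain_def)
  then show ?thesis by (auto simp: maximal_reg_chain_def subset.maxchain_def psubset_eq)
qed

locale serial_trans_on =
  fixes U :: "'a set" and R :: "('a \<times> 'a) set"
  assumes finite_U: "finite U" and R_subset: "R \<subseteq> U \<times> U"
    and serial: "serial_on U R" and trans_R: "trans R"
begin

definition terminal :: "'a \<Rightarrow> bool" where
  "terminal y \<longleftrightarrow> y \<in> U \<and> (\<forall>z. (y, z) \<in> R \<longrightarrow> (z, y) \<in> R)"

definition terminal_classes :: "'a set set" where
  "terminal_classes = successors R ` Collect terminal"

definition classes_meeting :: "'a set \<Rightarrow> 'a set set" where
  "classes_meeting X = {c \<in> terminal_classes. c \<inter> X \<noteq> {}}"

definition points_within :: "'a set set \<Rightarrow> 'a set" where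
  "points_within S = {x \<in> U. \<forall>c\<in>terminal_classes. c \<subseteq> successors R x \<longrightarrow> c \<in> S}"

lemma successors_subset_U: "successors R x \<subseteq> U"
  using R_subset by (auto simp: successors_def)

lemma successors_trans: "y \<in> successors R x \<Longrightarrow> successors R y \<subseteq> successors R x"
  using trans_R unfolding successors_def trans_def by blast

lemma terminal_in_successors:
  assumes "terminal y" shows "y \<in> successors R y"
proof -
  obtain z where "(y, z) \<in> R" using assms serial by (auto simp: serial_on_def terminal_def)
  moreover from this have "(z, y) \<in> R" using assms by (simp add: terminal_def)
  ultimately show ?thesis using trans_R by (auto simp: successors_def dest: transD)
qed

lemma successors_terminal_successor:
  assumes "terminal y" "z \<in> successors R y"
  shows "successors R z = successors R y"
proof -
  have "(y, z) \<in> R" "(z, y) \<in> R" using assms by (auto simp: successors_def terminal_def)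
  then show ?thesis using trans_R unfolding successors_def by (auto dest: transD)
qed

text \<open>A successor with the fewest successors is terminal: all of its own successors
  have the same successor set, so they all reach it back.\<close>
lemma terminal_successor_exists:
  assumes "x \<in> U" obtains w where "terminal w" "w \<in> successors R x"
proof -
  have finite_succ: "finite (successors R v)" for v
    using successors_subset_U finite_U finite_subset by blast
  obtain y0 where "y0 \<in> successors R x"
    using serial assms by (auto simp: serial_on_def successors_def)
  then obtain y where y: "y \<in> successors R x"
    and y_min: "\<And>v. v \<in> successors R x \<Longrightarrow> card (successors R y) \<le> card (successors R v)"
    using ex_has_least_nat[of "\<lambda>v. v \<in> successors R x" y0 "\<lambda>v. card (successors R v)"] by blast
  have same: "successors R v = successors R y" if "v \<in> successors R y" for v
    using successors_trans[OF that] y_min[of v] that y successors_trans finite_succ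
    by (metis card_seteq subsetD)
  obtain w where w: "w \<in> successors R y"
    using serial y successors_subset_U by (force simp: serial_on_def successors_def)
  have "terminal w"
    unfolding terminal_def
  proof (intro conjI allI impI)
    show "w \<in> U" using w successors_subset_U by blast
    fix z assume "(w, z) \<in> R"
    then have "z \<in> successors R y" using w successors_trans by (auto simp: successors_def)
    then show "(z, w) \<in> R" using same w by (auto simp: successors_def)
  qed
  with w y successors_trans show ?thesis using that by blast
qed

lemma terminal_class_below:
  assumes "x \<in> U" obtains c where "c \<in> terminal_classes" "c \<subseteq> successors R x"
  using terminal_successor_exists[OF assms] successors_trans
  by (metis terminal_classes_def image_eqI mem_Collect_eq)

lemma lower_upper_approx_eq:
  "lower_approx U R (upper_approx U R X) = points_within (classes_meeting X)"
proof (rule set_eqI, rule iffI)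
  fix x assume "x \<in> lower_approx U R (upper_approx U R X)"
  then have x: "x \<in> U" "\<And>y. y \<in> successors R x \<Longrightarrow> successors R y \<inter> X \<noteq> {}"
    by (auto simp: lower_approx_def upper_approx_def)
  have "c \<in> classes_meeting X" if c: "c \<in> terminal_classes" "c \<subseteq> successors R x" for c
  proof -
    obtain t where "terminal t" "c = successors R t" using c(1) by (auto simp: terminal_classes_def)
    then show ?thesis using c x(2) terminal_in_successors by (auto simp: classes_meeting_def)
  qed
  with x(1) show "x \<in> points_within (classes_meeting X)" by (simp add: points_within_def)
next
  fix x assume x: "x \<in> points_within (classes_meeting X)"
  have "successors R y \<inter> X \<noteq> {}" if y: "y \<in> successors R x" for y
  proof -
    obtain c where c: "c \<in> terminal_classes" "c \<subseteq> successors R y"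
      using terminal_class_below y successors_subset_U by blast
    moreover have "c \<subseteq> successors R x" using c(2) successors_trans[OF y] by blast
    ultimately have "c \<in> classes_meeting X" using x unfolding points_within_def by blast
    then show ?thesis using c(2) unfolding classes_meeting_def by blast
  qed
  with x successors_subset_U show "x \<in> lower_approx U R (upper_approx U R X)"
    by (auto simp: lower_approx_def upper_approx_def points_within_def)
qed

text \<open>Each terminal class \<open>c = successors R t\<close> contains the point \<open>t\<close>, whose only
  terminal class is \<open>c\<close> itself.\<close>
lemma classes_meeting_points_within:
  assumes "S \<subseteq> terminal_classes" shows "classes_meeting (points_within S) = S"
proof (rule set_eqI, rule iffI)
  fix c assume "c \<in> classes_meeting (points_within S)"
  then obtain t z where t: "terminal t" "c = successors R t" and z: "z \<in> c" "z \<in> points_within S"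
    by (auto simp: classes_meeting_def terminal_classes_def)
  have "successors R z = c" using successors_terminal_successor t z(1) by blast
  moreover have "c \<in> terminal_classes" using t by (simp add: terminal_classes_def)
  ultimately show "c \<in> S" using z(2) unfolding points_within_def by blast
next
  fix c assume "c \<in> S"
  then obtain t where t: "terminal t" "c = successors R t"
    using assms by (auto simp: terminal_classes_def)
  have "c' \<in> S" if c': "c' \<in> terminal_classes" "c' \<subseteq> successors R t" for c'
  proof -
    obtain t' where t': "terminal t'" "c' = successors R t'"
      using c'(1) by (auto simp: terminal_classes_def)
    then have "t' \<in> successors R t" using c'(2) terminal_in_successors by blast
    then have "c' = c" using successors_terminal_successor t t' by metis
    then show ?thesis using \<open>c \<in> S\<close> by simp
  qed
  then have "t \<in> points_within S" using t(1) unfolding points_within_def terminal_def by blast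
  then show "c \<in> classes_meeting (points_within S)"
    using t \<open>c \<in> S\<close> assms terminal_in_successors by (auto simp: classes_meeting_def)
qed

lemma points_within_classes_meeting: "X \<in> Reg U R \<Longrightarrow> points_within (classes_meeting X) = X"
  by (simp add: Reg_def lower_upper_approx_eq)

lemma Reg_iff: "X \<in> Reg U R \<longleftrightarrow> (\<exists>S\<subseteq>terminal_classes. X = points_within S)"
proof
  assume "X \<in> Reg U R"
  then have "X = points_within (classes_meeting X)" by (simp add: points_within_classes_meeting)
  moreover have "classes_meeting X \<subseteq> terminal_classes" by (auto simp: classes_meeting_def)
  ultimately show "\<exists>S\<subseteq>terminal_classes. X = points_within S" by blast
next
  assume "\<exists>S\<subseteq>terminal_classes. X = points_within S"
  then obtain S where "S \<subseteq> terminal_classes" "X = points_within S" by blast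
  moreover have "points_within S \<subseteq> U" by (auto simp: points_within_def)
  ultimately show "X \<in> Reg U R"
    by (simp add: Reg_def lower_upper_approx_eq classes_meeting_points_within)
qed

lemma finite_terminal_classes: "finite terminal_classes"
proof -
  have "Collect terminal \<subseteq> U" by (auto simp: terminal_def)
  then show ?thesis unfolding terminal_classes_def using finite_U finite_subset by blast
qed

lemma points_within_mono: "S \<subseteq> T \<Longrightarrow> points_within S \<subseteq> points_within T"
  by (auto simp: points_within_def)

lemma Reg_subset_iff:
  assumes "X \<in> Reg U R" "Y \<in> Reg U R"
  shows "X \<subseteq> Y \<longleftrightarrow> classes_meeting X \<subseteq> classes_meeting Y"
proof
  assume "classes_meeting X \<subseteq> classes_meeting Y"
  then show "X \<subseteq> Y" using points_within_mono points_within_classes_meeting assms by metis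
qed (auto simp: classes_meeting_def)

lemma empty_in_Reg: "{} \<in> Reg U R"
  using serial by (auto simp: Reg_def lower_approx_def upper_approx_def serial_on_def successors_def)

lemma classes_meeting_strict_mono:
  assumes "X \<in> Reg U R" "Y \<in> Reg U R" "X \<subset> Y"
  shows "card (classes_meeting X) < card (classes_meeting Y)"
proof (rule psubset_card_mono)
  show "finite (classes_meeting Y)"
    using finite_terminal_classes by (auto simp: classes_meeting_def)
  show "classes_meeting X \<subset> classes_meeting Y"
    using Reg_subset_iff[OF assms(1,2)] Reg_subset_iff[OF assms(2,1)] assms(3) by blast
qed

text \<open>Adding a single class to \<open>classes_meeting X\<close> gives the regular set just above \<open>X\<close>.\<close>
lemma Reg_covering_step:
  assumes X: "X \<in> Reg U R" and Y: "Y \<in> Reg U R" and "X \<subset> Y"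
  shows "\<exists>Z\<in>Reg U R. X \<subset> Z \<and> Z \<subseteq> Y \<and>
    card (classes_meeting Z) = Suc (card (classes_meeting X))"
proof -
  have "classes_meeting X \<subset> classes_meeting Y"
    using Reg_subset_iff[OF X Y] Reg_subset_iff[OF Y X] \<open>X \<subset> Y\<close> by blast
  then obtain c where c: "c \<in> classes_meeting Y" "c \<notin> classes_meeting X" by blast
  define S where "S = insert c (classes_meeting X)"
  have S: "S \<subseteq> terminal_classes" using c by (auto simp: S_def classes_meeting_def)
  define Z where "Z = points_within S"
  have Z: "Z \<in> Reg U R" and "classes_meeting Z = S"
    using S Reg_iff classes_meeting_points_within by (auto simp: Z_def)
  moreover have "finite (classes_meeting X)"
    using finite_terminal_classes by (auto simp: classes_meeting_def)
  moreover have "classes_meeting X \<subset> S" "S \<subseteq> classes_meeting Y"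
    using c \<open>classes_meeting X \<subset> classes_meeting Y\<close> by (auto simp: S_def)
  ultimately show ?thesis
    using Reg_subset_iff[OF X Z] Reg_subset_iff[OF Z X] Reg_subset_iff[OF Z Y] c(2)
    by (intro bexI[of _ Z]) (auto simp: S_def)
qed

text \<open>The interval below a regular set \<open>A\<close> is isomorphic to the power set of
  \<open>classes_meeting A\<close>, graded by cardinality.\<close>
lemma graded_Reg_interval:
  assumes A: "A \<in> Reg U R"
  shows "graded_set_family {B \<in> Reg U R. B \<subseteq> A} {} A (\<lambda>X. card (classes_meeting X))"
proof
  let ?P = "{B \<in> Reg U R. B \<subseteq> A}"
  show "finite ?P" using finite_U by (auto simp: Reg_def intro: finite_subset[of _ "Pow U"])
  show "{} \<in> ?P" "A \<in> ?P" using empty_in_Reg A by auto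
  show "card (classes_meeting {}) = 0" by (simp add: classes_meeting_def)
  fix X Y assume XY: "X \<in> ?P" "Y \<in> ?P" "X \<subset> Y"
  then have "X \<in> Reg U R" "Y \<in> Reg U R" by auto
  then show "card (classes_meeting X) < card (classes_meeting Y)"
    using classes_meeting_strict_mono XY(3) by blast
  obtain Z where "Z \<in> Reg U R" "X \<subset> Z" "Z \<subseteq> Y"
    "card (classes_meeting Z) = Suc (card (classes_meeting X))"
    using Reg_covering_step[OF \<open>X \<in> Reg U R\<close> \<open>Y \<in> Reg U R\<close> XY(3)] by blast
  with XY(2) show "\<exists>Z\<in>?P. X \<subset> Z \<and> Z \<subseteq> Y \<and>
      card (classes_meeting Z) = Suc (card (classes_meeting X))" by blast
qed auto

lemma height_Reg:
  assumes A: "A \<in> Reg U R" shows "height U R A = card (classes_meeting A)"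
proof -
  interpret graded_set_family "{B \<in> Reg U R. B \<subseteq> A}" "{}" A "\<lambda>X. card (classes_meeting X)"
    using graded_Reg_interval[OF A] .
  obtain C where "subset.maxchain {B \<in> Reg U R. B \<subseteq> A} C" using subset.Hausdorff by blast
  then show ?thesis unfolding height_def maximal_reg_chain_iff
    using card_maxchain by (intro some_equality) auto
qed

sublocale intersective_map terminal_classes points_within
  by unfold_locales (auto simp: finite_terminal_classes points_within_def)

lemma indep_sets_eq: "indep_sets U R = {I. I \<subseteq> U \<and> card_bounded I}"
proof -
  have "(\<forall>Y\<in>Reg U R. card (I \<inter> Y) \<le> height U R Y) \<longleftrightarrow>
      (\<forall>S\<subseteq>terminal_classes. card (I \<inter> points_within S) \<le> card S)" for I
  proof (intro iffI allI impI ballI)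
    fix S assume "\<forall>Y\<in>Reg U R. card (I \<inter> Y) \<le> height U R Y" "S \<subseteq> terminal_classes"
    then show "card (I \<inter> points_within S) \<le> card S"
      using Reg_iff height_Reg classes_meeting_points_within by metis
  next
    fix Y assume bound: "\<forall>S\<subseteq>terminal_classes. card (I \<inter> points_within S) \<le> card S"
      and Y: "Y \<in> Reg U R"
    have "classes_meeting Y \<subseteq> terminal_classes" by (auto simp: classes_meeting_def)
    then have "card (I \<inter> points_within (classes_meeting Y)) \<le> card (classes_meeting Y)"
      using bound by blast
    then show "card (I \<inter> Y) \<le> height U R Y"
      using height_Reg[OF Y] points_within_classes_meeting[OF Y] by simp
  qed
  moreover have "I \<subseteq> U \<Longrightarrow> finite I" for I using finite_U finite_subset by blast
  ultimately show ?thesis by (auto simp: indep_sets_def card_bounded_def)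
qed

end

theorem proposition2:
  fixes U :: "'a set" and R :: "('a \<times> 'a) set"
  assumes "finite U" and "U \<noteq> {}"
    and "R \<subseteq> U \<times> U"
    and "serial_on U R"
    and "trans R"
  shows "{} \<in> indep_sets U R \<and>
         (\<forall>I I'. I \<in> indep_sets U R \<and> I' \<subseteq> I \<longrightarrow> I' \<in> indep_sets U R) \<and>
         (\<forall>I1 I2. I1 \<in> indep_sets U R \<and> I2 \<in> indep_sets U R \<and> card I1 < card I2 \<longrightarrow>
           (\<exists>e\<in>I2 - I1. insert e I1 \<in> indep_sets U R))"
proof -
  interpret serial_trans_on U R using assms(1,3-5) by unfold_locales
  have "{} \<in> indep_sets U R"
    using card_bounded_empty by (simp add: indep_sets_eq)
  moreover have "I' \<in> indep_sets U R" if "I \<in> indep_sets U R" "I' \<subseteq> I" for I I'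
    using that card_bounded_subset by (auto simp: indep_sets_eq)
  moreover have "\<exists>e\<in>I2 - I1. insert e I1 \<in> indep_sets U R"
    if "I1 \<in> indep_sets U R" "I2 \<in> indep_sets U R" "card I1 < card I2" for I1 I2
    using that card_bounded_augment by (fastforce simp: indep_sets_eq)
  ultimately show ?thesis by blast
qed

end
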